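(* Let $\Gamma=M\mathbb{Z}^n$ be a lattice in $\mathbb{R}^n$ (or $\mathbb{C}^n$), with $M$ an invertible real (or complex) $n\times n$ matrix, and let $A$ be a dilation matrix for $\Gamma$. Let $\mu'$ be the smallest singular value of $B=M^{-1}AM$, i.e. $\mu'=\min\{\|Ax\|_{l^2(\Gamma)}:\|x\|_{l^2(\Gamma)}=1\}$ where $\|\sum_i x_iMe_i\|_{l^2(\Gamma)}=(\sum_i|x_i|^2)^{1/2}$ for real coefficients $x_i$. If $\mu'>2$, then $A$ yields a radix representation of $\Gamma$ with digit set $D=A(F_\Gamma)\cap\Gamma$, $F_\Gamma=M([-\tfrac12,\tfrac12)^n)$: every $x\in\Gamma$ equals $\sum_{j=0}^NA^jd_j$ for some $N\ge0$ and $d_j\in D$.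
   Context: An integer dilation matrix is an $n\times n$ matrix with integer entries all of whose eigenvalues $\lambda$ satisfy $|\lambda|>1$. A matrix $A$ is a dilation matrix for $\Gamma=M\mathbb{Z}^n$ if $M^{-1}AM$ is an integer dilation matrix. $e_1,\dots,e_n$ is the standard basis of $\mathbb{Z}^n$. *)

theory Defs
  imports "HOL-Analysis.Analysis"
begin

definition lattice :: "real^'n^'n \<Rightarrow> (real^'n) set" where
  "lattice M = {M *v z | z. \<forall>i. z $ i \<in> \<int>}"

definition int_dilation :: "real^'n^'n \<Rightarrow> bool" where
  "int_dilation B \<longleftrightarrow> (\<forall>i j. B $ i $ j \<in> \<int>) \<and>
     (\<forall>c::complex. det (mat c - (\<chi> i j. complex_of_real (B $ i $ j))) = 0 \<longrightarrow> norm c > 1)"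

definition dilation_for :: "real^'n^'n \<Rightarrow> real^'n^'n \<Rightarrow> bool" where
  "dilation_for M A \<longleftrightarrow> int_dilation (matrix_inv M ** A ** M)"

text \<open>The norm on l^2(\<Gamma>): norm of sum x_i M e_i is the Euclidean norm of the coefficient vector x.\<close>
definition gamma_norm :: "real^'n^'n \<Rightarrow> real^'n \<Rightarrow> real" where
  "gamma_norm M y = norm (matrix_inv M *v y)"

definition mu' :: "real^'n^'n \<Rightarrow> real^'n^'n \<Rightarrow> real" where
  "mu' M A = Inf {gamma_norm M (A *v y) | y. gamma_norm M y = 1}"

definition fund_dom :: "real^'n^'n \<Rightarrow> (real^'n) set" where
  "fund_dom M = (\<lambda>x. M *v x) ` {x. \<forall>i. -1/2 \<le> x $ i \<and> x $ i < 1/2}"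

definition digits :: "real^'n^'n \<Rightarrow> real^'n^'n \<Rightarrow> (real^'n) set" where
  "digits M A = (\<lambda>x. A *v x) ` fund_dom M \<inter> lattice M"

end

theory Submission
  imports Defs
begin

text \<open>
  Write \<open>x = M z\<close> with \<open>z \<in> \<int>\<^sup>n\<close> and \<open>B = M\<^sup>-\<^sup>1 A M\<close>. Solve \<open>A u = x\<close>, round the coordinates
  \<open>w = M\<^sup>-\<^sup>1 u\<close> to the nearest integer vector \<open>q\<close>; then \<open>d = x - A M q = A M (w - q)\<close> lies in
  \<open>A F\<^sub>\<Gamma>\<close> and equals \<open>M (z - B q) \<in> \<Gamma>\<close>, so it is a digit. Rounding at most doubles each coordinate,
  so \<open>|q| \<le> 2 |w| \<le> (2/\<mu>') |z| < |z|\<close> unless \<open>q = 0\<close>. Since integer vectors have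
  integral squared norms, iterating \<open>x \<mapsto> M q\<close> terminates, producing the radix expansion.
\<close>

definition has_radix_expansion :: "real^'n^'n \<Rightarrow> (real^'n) set \<Rightarrow> real^'n \<Rightarrow> bool" where
  "has_radix_expansion A D x \<longleftrightarrow> (\<exists>N::nat. \<exists>d::nat \<Rightarrow> real^'n.
     (\<forall>j\<le>N. d j \<in> D) \<and> x = (\<Sum>j\<le>N. ((\<lambda>v. A *v v) ^^ j) (d j)))"

lemma has_radix_expansion_digit:
  assumes "d \<in> D"
  shows "has_radix_expansion A D d"
  unfolding has_radix_expansion_def using assms by (intro exI[of _ 0] exI[of _ "\<lambda>_. d"]) auto

lemma has_radix_expansion_Cons:
  assumes "d \<in> D" and "has_radix_expansion A D y"
  shows "has_radix_expansion A D (d + A *v y)"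
proof -
  obtain N e where e: "\<forall>j\<le>N. e j \<in> D" and y: "y = (\<Sum>j\<le>N. ((\<lambda>v. A *v v) ^^ j) (e j))"
    using assms(2) unfolding has_radix_expansion_def by blast
  define e' where "e' j = (case j of 0 \<Rightarrow> d | Suc k \<Rightarrow> e k)" for j
  have "\<forall>j\<le>Suc N. e' j \<in> D"
    using assms(1) e by (auto simp: e'_def split: nat.splits)
  moreover have "A *v y = (\<Sum>j\<le>N. A *v (((\<lambda>v. A *v v) ^^ j) (e j)))"
    unfolding y using linear_sum[OF matrix_vector_mul_linear, of A] by (simp add: o_def)
  then have "d + A *v y = (\<Sum>j\<le>Suc N. ((\<lambda>v. A *v v) ^^ j) (e' j))"
    by (simp add: e'_def sum.atMost_Suc_shift del: sum.atMost_Suc)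
  ultimately show ?thesis
    unfolding has_radix_expansion_def by blast
qed

lemma matrix_inv_right: "invertible M \<Longrightarrow> M ** matrix_inv M = mat 1"
  and matrix_inv_left: "invertible M \<Longrightarrow> matrix_inv M ** M = mat 1"
  using someI_ex[of "\<lambda>N. M ** N = mat 1 \<and> N ** M = mat 1"]
  unfolding invertible_def matrix_inv_def by auto

lemma abs_round_le_twice_abs: "\<bar>real_of_int (round t)\<bar> \<le> 2 * \<bar>t\<bar>"
proof (cases "\<bar>t\<bar> < 1/2")
  case True
  then have "round t = 0"
    by (intro round_unique') simp
  then show ?thesis by simp
next
  case False
  then show ?thesis
    using of_int_round_abs_le[of t] by linarith
qed

lemma Ints_norm_power2:
  fixes z :: "real^'n"
  assumes "\<forall>i. z $ i \<in> \<int>"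
  shows "norm z ^ 2 \<in> \<int>"
proof -
  have "norm z ^ 2 = (\<Sum>i\<in>UNIV. z $ i * z $ i)"
    by (simp add: power2_norm_eq_inner inner_vec_def)
  also have "\<dots> \<in> \<int>"
    using assms by (intro Ints_sum Ints_mult) auto
  finally show ?thesis .
qed

lemma integer_vector_norm_induct [consumes 1, case_names less]:
  fixes z :: "real^'n"
  assumes "\<forall>i. z $ i \<in> \<int>"
    and step: "\<And>z. \<forall>i. z $ i \<in> \<int> \<Longrightarrow>
               (\<And>q. \<forall>i. q $ i \<in> \<int> \<Longrightarrow> norm q < norm z \<Longrightarrow> P q) \<Longrightarrow> P z"
  shows "P z"
  using assms(1)
proof (induction "nat \<lfloor>norm z ^ 2\<rfloor>" arbitrary: z rule: less_induct)
  case less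
  show ?case
  proof (rule step[OF less.prems])
    fix q :: "real^'n"
    assume q: "\<forall>i. q $ i \<in> \<int>" and "norm q < norm z"
    then have "norm q ^ 2 < norm z ^ 2"
      by (simp add: power_strict_mono)
    moreover obtain a b where "norm q ^ 2 = of_int a" "norm z ^ 2 = of_int b"
      using Ints_norm_power2[OF q] Ints_norm_power2[OF less.prems] by (auto elim!: Ints_cases)
    moreover have "0 \<le> norm q ^ 2"
      by simp
    ultimately have "nat \<lfloor>norm q ^ 2\<rfloor> < nat \<lfloor>norm z ^ 2\<rfloor>"
      by simp
    then show "P q"
      using less.hyps q by blast
  qed
qed

lemma gamma_norm_scaleR: "gamma_norm M (c *\<^sub>R y) = \<bar>c\<bar> * gamma_norm M y"
  by (simp add: gamma_norm_def matrix_vector_mult_scaleR)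

lemma gamma_norm_lattice_coords:
  assumes "invertible M"
  shows "gamma_norm M (M *v z) = norm z"
  using matrix_inv_left[OF assms] by (simp add: gamma_norm_def matrix_vector_mul_assoc)

lemma gamma_norm_eq_0_iff:
  assumes "invertible M"
  shows "gamma_norm M y = 0 \<longleftrightarrow> y = 0"
proof
  assume "gamma_norm M y = 0"
  then have "M *v (matrix_inv M *v y) = 0"
    by (simp add: gamma_norm_def)
  then show "y = 0"
    using matrix_inv_right[OF assms] by (simp add: matrix_vector_mul_assoc)
qed (simp add: gamma_norm_def)

lemma mu'_mult_gamma_norm_le: "mu' M A * gamma_norm M y \<le> gamma_norm M (A *v y)"
proof (cases "gamma_norm M y = 0")
  case True
  then show ?thesis
    by (simp add: gamma_norm_def)
next
  case False
  define c where "c = gamma_norm M y"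
  have c: "c > 0"
    using False by (simp add: c_def gamma_norm_def)
  have "gamma_norm M ((1/c) *\<^sub>R y) = 1"
    using c by (simp add: gamma_norm_scaleR c_def)
  then have "gamma_norm M (A *v ((1/c) *\<^sub>R y)) \<in> {gamma_norm M (A *v y) | y. gamma_norm M y = 1}"
    by blast
  then have "mu' M A \<le> gamma_norm M (A *v ((1/c) *\<^sub>R y))"
    unfolding mu'_def
    by (rule cInf_lower) (auto simp: bdd_below_def gamma_norm_def intro!: exI[of _ 0])
  also have "\<dots> = gamma_norm M (A *v y) / c"
    using c by (simp add: matrix_vector_mult_scaleR gamma_norm_scaleR)
  finally show ?thesis
    using c by (simp add: c_def field_simps)
qed

lemma surj_matrix_vector_mult_if_mu'_pos:
  assumes "invertible M" and "mu' M A > 0"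
  shows "surj ((*v) A)"
proof -
  have "inj ((*v) A)"
  proof (rule injI)
    fix y y'
    assume "A *v y = A *v y'"
    then have "mu' M A * gamma_norm M (y - y') \<le> 0"
      using mu'_mult_gamma_norm_le[of M A "y - y'"]
      by (simp add: gamma_norm_def matrix_vector_mult_diff_distrib)
    then have "gamma_norm M (y - y') = 0"
      using assms(2) by (simp add: gamma_norm_def mult_le_0_iff)
    then show "y = y'"
      using gamma_norm_eq_0_iff[OF assms(1)] by simp
  qed
  then show ?thesis
    using linear_injective_imp_surjective[OF matrix_vector_mul_linear] by blast
qed

lemma lattice_digit_division:
  fixes M A :: "real^'n^'n"
  assumes M: "invertible M"
    and B: "\<forall>i j. (matrix_inv M ** A ** M) $ i $ j \<in> \<int>"
    and z: "\<forall>i. z $ i \<in> \<int>"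
    and u: "A *v u = M *v z"
  obtains d q where "d \<in> digits M A" "\<forall>i. q $ i \<in> \<int>"
    "M *v z = d + A *v (M *v q)" "norm q \<le> 2 * gamma_norm M u"
proof
  define w where "w = matrix_inv M *v u"
  define q :: "real^'n" where "q = (\<chi> i. of_int (round (w $ i)))"
  define d where "d = M *v z - A *v (M *v q)"
  show q_int: "\<forall>i. q $ i \<in> \<int>"
    by (simp add: q_def)
  show "M *v z = d + A *v (M *v q)"
    by (simp add: d_def)
  have "M *v w = u"
    using matrix_inv_right[OF M] by (simp add: w_def matrix_vector_mul_assoc)
  then have "d = A *v (M *v (w - q))"
    using u by (simp add: d_def matrix_vector_mult_diff_distrib)
  moreover have "-1/2 \<le> (w - q) $ i \<and> (w - q) $ i < 1/2" for i
    using of_int_round_le[of "w $ i"] of_int_round_gt[of "w $ i"] by (simp add: q_def)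
  ultimately have "d \<in> (\<lambda>x. A *v x) ` fund_dom M"
    unfolding fund_dom_def by auto
  moreover have "d = M *v (z - (matrix_inv M ** A ** M) *v q)"
  proof -
    have "M ** (matrix_inv M ** A ** M) = A ** M"
      using matrix_inv_right[OF M] by (simp add: matrix_mul_assoc)
    then show ?thesis
      by (simp add: d_def matrix_vector_mult_diff_distrib matrix_vector_mul_assoc)
  qed
  moreover have "\<forall>i. (z - (matrix_inv M ** A ** M) *v q) $ i \<in> \<int>"
    using z B q_int by (auto simp: matrix_vector_mult_def intro!: Ints_diff Ints_sum Ints_mult)
  ultimately show "d \<in> digits M A"
    unfolding digits_def lattice_def by blast
  have "norm q \<le> norm (2 *\<^sub>R w)"
    by (rule norm_le_componentwise_cart) (simp add: q_def abs_mult abs_round_le_twice_abs)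
  then show "norm q \<le> 2 * gamma_norm M u"
    by (simp add: gamma_norm_def w_def)
qed

lemma lattice_has_radix_expansion:
  fixes M A :: "real^'n^'n"
  assumes M: "invertible M"
    and B: "\<forall>i j. (matrix_inv M ** A ** M) $ i $ j \<in> \<int>"
    and \<mu>: "mu' M A > 2"
    and x: "x \<in> lattice M"
  shows "has_radix_expansion A (digits M A) x"
proof -
  obtain z where x_eq: "x = M *v z" and z: "\<forall>i. z $ i \<in> \<int>"
    using x unfolding lattice_def by blast
  have "has_radix_expansion A (digits M A) (M *v z)"
    using z
  proof (induction z rule: integer_vector_norm_induct)
    case (less z)
    obtain u where u: "A *v u = M *v z"
      using surj_matrix_vector_mult_if_mu'_pos[OF M] \<mu> by (metis surjD order_less_trans zero_less_numeral)
    obtain d q where d: "d \<in> digits M A" and q: "\<forall>i. q $ i \<in> \<int>"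
      and z_eq: "M *v z = d + A *v (M *v q)" and q_le: "norm q \<le> 2 * gamma_norm M u"
      using lattice_digit_division[OF M B less.hyps u] .
    show ?case
    proof (cases "q = 0")
      case True
      then show ?thesis
        using z_eq has_radix_expansion_digit[OF d] by simp
    next
      case False
      then have "0 < norm q"
        by simp
      then have "0 < gamma_norm M u"
        using q_le by linarith
      then have "2 * gamma_norm M u < mu' M A * gamma_norm M u"
        using \<mu> by simp
      also have "\<dots> \<le> norm z"
        using mu'_mult_gamma_norm_le[of M A u] u gamma_norm_lattice_coords[OF M] by simp
      finally have "norm q < norm z"
        using q_le by linarith
      then show ?thesis
        using z_eq has_radix_expansion_Cons[OF d less.IH[OF q]] by simp
    qed
  qed
  then show ?thesis
    using x_eq by simp
qed

theorem mainTheorem10: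
  fixes M A :: "real^'n^'n"
  assumes "invertible M"
    and "dilation_for M A"
    and "mu' M A > 2"
  shows "\<forall>x \<in> lattice M. \<exists>N::nat. \<exists>d::nat \<Rightarrow> real^'n.
           (\<forall>j\<le>N. d j \<in> digits M A) \<and> x = (\<Sum>j\<le>N. ((\<lambda>v. A *v v) ^^ j) (d j))"
proof -
  have "\<forall>i j. (matrix_inv M ** A ** M) $ i $ j \<in> \<int>"
    using assms(2) unfolding dilation_for_def int_dilation_def by blast
  then show ?thesis
    using lattice_has_radix_expansion[OF assms(1) _ assms(3)]
    unfolding has_radix_expansion_def by blast
qed

end
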